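(* In the setting described in the context, let $(x^k)$, $(\bar x^k)$, $(\alpha_k)$ be the sequences generated by the Conceptual Algorithm (with either Method 1 or Method 2). Then, for each $k$, $x^k\in T_k$ if and only if $x^k\in\operatorname{zer}(A+B)$.
   Context: Let $\mathcal H$ be a real Hilbert space with inner product $\langle\cdot,\cdot\rangle$ and norm $\|\cdot\|$. Let $A_1:\mathcal H\to\mathcal H$ be $\beta$-cocoercive for some $\beta>0$ (i.e. $\langle A_1x-A_1y,x-y\rangle\ge\beta\|A_1x-A_1y\|^2$ for all $x,y$), let $A_2:\mathcal H\to\mathcal H$ be maximally monotone and uniformly continuous, let $B:\mathcal H\rightrightarrows\mathcal H$ be maximally monotone, and set $A:=A_1+A_2$. Assume $\operatorname{zer}(A+B):=\{x:0\in Ax+Bx\}\neq\emptyset$. $J_{\alpha B}:=(I+\alpha B)^{-1}$ for $\alpha>0$, and $P_C$ denotes the orthogonal projection onto a nonempty closed convex set $C$. Fix $\theta,\delta\in(0,1)$, $\bar\delta>0$ with $1-\delta-\bar\delta>0$, and $\alpha_{-1}>0$ with $\alpha_{-1}\le4\beta\bar\delta$. Conceptual Algorithm: pick $x^0\in\mathcal H$. Given $x^k$ and $\alpha_{k-1}$, for $j\in\mathbb N$ let $\bar x^k_j:=J_{\alpha_{k-1}\theta^jB}(x^k-\alpha_{k-1}\theta^jAx^k)$ and let $j(k)$ be the smallest $j\in\mathbb N$ with $\alpha_{k-1}\theta^j\langle A_2x^k-A_2\bar x^k_j,x^k-\bar x^k_j\rangle\le\delta\|x^k-\bar x^k_j\|^2$.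 Set $\alpha_k:=\alpha_{k-1}\theta^{j(k)}$, $\bar x^k:=J_{\alpha_kB}(x^k-\alpha_kAx^k)$, $r_k:=\frac{\bar\delta}{\alpha_k}\|x^k-\bar x^k\|^2$, $T_k:=\{x\in\mathcal H:\langle \frac{x^k-\bar x^k}{\alpha_k}-(A_2x^k-A_2\bar x^k),x-\bar x^k\rangle\le r_k\}$ and $\Gamma_k:=\{x\in\mathcal H:\langle x^0-x^k,x-x^k\rangle\le0\}$. Method 1 sets $x^{k+1}:=P_{T_k}(x^k)$; Method 2 sets $x^{k+1}:=P_{T_k\cap\Gamma_k}(x^0)$. The algorithm stops if $x^{k+1}=x^k$. *)

theory Defs
  imports "HOL-Analysis.Analysis"
begin

definition monotone_op :: "('a::real_inner \<Rightarrow> 'a set) \<Rightarrow> bool" where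
  "monotone_op B \<longleftrightarrow> (\<forall>x y u v. u \<in> B x \<longrightarrow> v \<in> B y \<longrightarrow> inner (u - v) (x - y) \<ge> 0)"

definition maximal_monotone :: "('a::real_inner \<Rightarrow> 'a set) \<Rightarrow> bool" where
  "maximal_monotone B \<longleftrightarrow> monotone_op B \<and>
     (\<forall>x u. (\<forall>y v. v \<in> B y \<longrightarrow> inner (u - v) (x - y) \<ge> 0) \<longrightarrow> u \<in> B x)"

definition cocoercive :: "real \<Rightarrow> ('a::real_inner \<Rightarrow> 'a) \<Rightarrow> bool" where
  "cocoercive \<beta> T \<longleftrightarrow> (\<forall>x y. inner (T x - T y) (x - y) \<ge> \<beta> * (norm (T x - T y))\<^sup>2)"

definition zer_sum :: "('a::real_inner \<Rightarrow> 'a) \<Rightarrow> ('a \<Rightarrow> 'a set) \<Rightarrow> 'a set" where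
  "zer_sum A B = {x. \<exists>b \<in> B x. A x + b = 0}"

text \<open>Resolvent J_{aB} z = (I + aB)^{-1} z, i.e. the p with z \<in> p + a B p.\<close>
definition resolvent :: "('a::real_inner \<Rightarrow> 'a set) \<Rightarrow> real \<Rightarrow> 'a \<Rightarrow> 'a" where
  "resolvent B a z = (THE p. (1 / a) *\<^sub>R (z - p) \<in> B p)"

definition proj :: "'a::real_inner set \<Rightarrow> 'a \<Rightarrow> 'a" where
  "proj C z = (THE p. p \<in> C \<and> (\<forall>y\<in>C. norm (z - p) \<le> norm (z - y)))"

definition fb_point :: "('a::real_inner \<Rightarrow> 'a set) \<Rightarrow> ('a \<Rightarrow> 'a) \<Rightarrow> real \<Rightarrow> 'a \<Rightarrow> 'a" where
  "fb_point B A a x = resolvent B a (x - a *\<^sub>R A x)"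

text \<open>Line search index j(k), given previous step size a = alpha_{k-1} and current iterate x.\<close>
definition ls_index :: "('a::real_inner \<Rightarrow> 'a set) \<Rightarrow> ('a \<Rightarrow> 'a) \<Rightarrow> ('a \<Rightarrow> 'a)
     \<Rightarrow> real \<Rightarrow> real \<Rightarrow> real \<Rightarrow> 'a \<Rightarrow> nat" where
  "ls_index B A A2 \<theta> \<delta> a x = (LEAST j::nat.
      a * \<theta> ^ j * inner (A2 x - A2 (fb_point B A (a * \<theta> ^ j) x)) (x - fb_point B A (a * \<theta> ^ j) x)
        \<le> \<delta> * (norm (x - fb_point B A (a * \<theta> ^ j) x))\<^sup>2)"

definition T_set :: "('a::real_inner \<Rightarrow> 'a set) \<Rightarrow> ('a \<Rightarrow> 'a) \<Rightarrow> ('a \<Rightarrow> 'a)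
     \<Rightarrow> real \<Rightarrow> real \<Rightarrow> 'a \<Rightarrow> 'a set" where
  "T_set B A A2 \<delta>b a x =
     (let xb = fb_point B A a x in
      {y. inner ((1 / a) *\<^sub>R (x - xb) - (A2 x - A2 xb)) (y - xb) \<le> (\<delta>b / a) * (norm (x - xb))\<^sup>2})"

definition Gamma_set :: "'a::real_inner \<Rightarrow> 'a \<Rightarrow> 'a set" where
  "Gamma_set x0 x = {y. inner (x0 - x) (y - x) \<le> 0}"

end

(* The forward-backward point x' = J_{aB}(x - a A x) equals x exactly when x is a zero of A + B.
   If x lies in T_k, the defining inequality of T_k together with the line-search inequality
   gives (1 - delta - delta_b) |x - x'|^2 <= 0, hence x' = x; conversely x' = x puts x in T_k.
   Only the step-size rule enters.

   The work lies in showing that J_{aB} and the line-search index are well defined.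
   The resolvent exists by Minty's theorem, proved by minimising c + |(x, u)|^2 / 2 over the
   closed convex epigraph of the Fitzpatrick function of B: the first-order condition at the
   minimiser (x0, u0) and maximality give -x0 in B(-u0), and then u0 = -x0.
   The line search terminates because |x - x'(mu)| is nondecreasing and |x - x'(mu)| / mu
   nonincreasing in mu, so uniform continuity of A2 forces
   mu |A2 x - A2 x'(mu)| <= delta |x - x'(mu)| for small mu. *)

theory Submission
  imports Defs
begin

section \<open>Minty's theorem\<close>

lemma maximal_monotone_imp_monotone: "maximal_monotone B \<Longrightarrow> monotone_op B"
  by (simp add: maximal_monotone_def)

lemma maximal_monotoneD:
  "maximal_monotone B \<Longrightarrow> (\<And>y v. v \<in> B y \<Longrightarrow> 0 \<le> inner (u - v) (x - y)) \<Longrightarrow> u \<in> B x"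
  unfolding maximal_monotone_def by blast

text \<open>The epigraph of the Fitzpatrick function
  F(x, u) = sup {inner x v + inner y u - inner y v | v \<in> B y};
  working with the epigraph avoids suprema of possibly unbounded sets.\<close>
definition fitzpatrick_epigraph :: "('a::real_inner \<Rightarrow> 'a set) \<Rightarrow> (('a \<times> 'a) \<times> real) set" where
  "fitzpatrick_epigraph B =
     {((x, u), c). \<forall>y v. v \<in> B y \<longrightarrow> inner x v + inner y u - inner y v \<le> c}"

lemma fitzpatrick_epigraph_eq_Inter_halfspaces:
  "fitzpatrick_epigraph B = (\<Inter>(y, v) \<in> {(y, v). v \<in> B y}. {w. inner ((v, y), -1) w \<le> inner y v})"
  unfolding fitzpatrick_epigraph_def by (fastforce simp: inner_commute)

lemma closed_fitzpatrick_epigraph: "closed (fitzpatrick_epigraph B)"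
  unfolding fitzpatrick_epigraph_eq_Inter_halfspaces
  by (intro closed_INT ballI) (auto intro: closed_halfspace_le)

lemma convex_fitzpatrick_epigraph: "convex (fitzpatrick_epigraph B)"
  unfolding fitzpatrick_epigraph_eq_Inter_halfspaces
  by (intro convex_INT ballI) (auto intro: convex_halfspace_le)

lemma graph_in_fitzpatrick_epigraph:
  assumes "monotone_op B" and "v \<in> B y"
  shows "((y, v), inner y v) \<in> fitzpatrick_epigraph B"
proof -
  have "inner y v' + inner y' v - inner y' v' \<le> inner y v" if "v' \<in> B y'" for y' v'
  proof -
    have "0 \<le> inner (v - v') (y - y')"
      using assms that unfolding monotone_op_def by blast
    then show ?thesis by (simp add: inner_diff inner_commute)
  qed
  then show ?thesis by (simp add: fitzpatrick_epigraph_def)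
qed

lemma fitzpatrick_epigraph_inner_le:
  assumes "maximal_monotone B" and "((x, u), c) \<in> fitzpatrick_epigraph B"
  shows "inner x u \<le> c"
proof (rule ccontr)
  assume "\<not> inner x u \<le> c"
  have bound: "inner x v + inner y u - inner y v \<le> c" if "v \<in> B y" for y v
    using assms(2) that by (auto simp: fitzpatrick_epigraph_def)
  have "u \<in> B x"
  proof (rule maximal_monotoneD[OF assms(1)])
    fix y v assume "v \<in> B y"
    from bound[OF this] \<open>\<not> inner x u \<le> c\<close> show "0 \<le> inner (u - v) (x - y)"
      by (simp add: inner_diff inner_commute)
  qed
  from bound[OF this] \<open>\<not> inner x u \<le> c\<close> show False by (simp add: inner_commute)
qed

lemma fitzpatrick_epigraph_add_half_sq_norm_nonneg:
  assumes "maximal_monotone B" and "(z, c) \<in> fitzpatrick_epigraph B"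
  shows "0 \<le> c + (norm z)\<^sup>2/2"
proof -
  obtain x u where z: "z = (x, u)" by fastforce
  have "inner x u \<le> c"
    using fitzpatrick_epigraph_inner_le[OF assms(1)] assms(2) by (simp add: z)
  moreover have "0 \<le> inner (x + u) (x + u)" by simp
  ultimately show ?thesis
    by (simp add: z power2_norm_eq_inner inner_simps inner_commute) argo
qed

lemma norm_midpoint_sq:
  fixes a b :: "'a::real_inner"
  shows "(norm ((1/2) *\<^sub>R a + (1/2) *\<^sub>R b))\<^sup>2 = (norm a)\<^sup>2/2 + (norm b)\<^sup>2/2 - (norm (a - b))\<^sup>2/4"
  unfolding power2_norm_eq_inner by (simp add: inner_simps inner_commute field_simps)

lemma Cauchy_minimizing_sequence_add_half_sq_norm:
  fixes E :: "('a::real_inner \<times> real) set"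
  assumes "convex E" and m_le: "\<And>z c. (z, c) \<in> E \<Longrightarrow> m \<le> c + (norm z)\<^sup>2/2"
    and zc_in: "\<And>n. (z n, c n) \<in> E" and lim: "(\<lambda>n. c n + (norm (z n))\<^sup>2/2) \<longlonglongrightarrow> m"
  shows "Cauchy z"
proof (rule metric_CauchyI)
  define q where "q n = c n + (norm (z n))\<^sup>2/2" for n
  have close: "(norm (z i - z j))\<^sup>2 \<le> 4 * q i + 4 * q j - 8 * m" for i j
  proof -
    have "(1/2) *\<^sub>R (z i, c i) + (1/2) *\<^sub>R (z j, c j) \<in> E"
      using convexD[OF \<open>convex E\<close> zc_in[of i] zc_in[of j], of "1/2" "1/2"] by simp
    then have "m \<le> (c i + c j)/2 + (norm ((1/2) *\<^sub>R z i + (1/2) *\<^sub>R z j))\<^sup>2/2"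
      using m_le by (simp add: add_divide_distrib)
    then show ?thesis
      using norm_midpoint_sq[of "z i" "z j"] by (simp add: q_def field_simps)
  qed
  fix e :: real assume "0 < e"
  define \<epsilon> where "\<epsilon> = e\<^sup>2/8"
  have "eventually (\<lambda>n. q n < m + \<epsilon>) sequentially"
    using lim \<open>0 < e\<close> unfolding q_def \<epsilon>_def by (intro order_tendstoD(2)) auto
  then obtain N where N: "\<And>n. N \<le> n \<Longrightarrow> q n < m + \<epsilon>"
    unfolding eventually_sequentially by blast
  have "dist (z i) (z j) < e" if "N \<le> i" "N \<le> j" for i j
  proof -
    have "(norm (z i - z j))\<^sup>2 < 8 * \<epsilon>"
      using close[of i j] N[OF \<open>N \<le> i\<close>] N[OF \<open>N \<le> j\<close>] by linarith
    then show ?thesis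
      using \<open>0 < e\<close> by (simp add: \<epsilon>_def dist_norm power2_less_imp_less)
  qed
  then show "\<exists>N. \<forall>i\<ge>N. \<forall>j\<ge>N. dist (z i) (z j) < e" by blast
qed

lemma ex_minimizer_add_half_sq_norm:
  fixes E :: "('a::{real_inner, complete_space} \<times> real) set"
  assumes "closed E" and "convex E" and "E \<noteq> {}"
    and lower: "\<And>z c. (z, c) \<in> E \<Longrightarrow> b \<le> c + (norm z)\<^sup>2/2"
  shows "\<exists>z0 c0. (z0, c0) \<in> E \<and> (\<forall>z c. (z, c) \<in> E \<longrightarrow> c0 + (norm z0)\<^sup>2/2 \<le> c + (norm z)\<^sup>2/2)"
proof -
  define q :: "'a \<times> real \<Rightarrow> real" where "q = (\<lambda>(z, c). c + (norm z)\<^sup>2/2)"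
  define m where "m = Inf (q ` E)"
  have bdd: "bdd_below (q ` E)"
    using lower by (fastforce simp: q_def bdd_below_def)
  have m_le: "m \<le> c + (norm z)\<^sup>2/2" if "(z, c) \<in> E" for z c
    using cInf_lower[OF imageI[OF that] bdd] by (simp add: m_def q_def)
  have "m \<in> closure (q ` E)"
    using closure_contains_Inf[of "q ` E"] bdd \<open>E \<noteq> {}\<close> by (simp add: m_def)
  then obtain u where u_in: "\<forall>n. u n \<in> q ` E" and "u \<longlonglongrightarrow> m"
    unfolding closure_sequential by blast
  from u_in have "\<forall>n. \<exists>w. w \<in> E \<and> u n = q w"
    by (simp add: image_iff Bex_def)
  then obtain w where w: "\<forall>n. w n \<in> E \<and> u n = q (w n)"
    by (rule choice[THEN exE])
  define z where "z n = fst (w n)" for n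
  define c where "c n = snd (w n)" for n
  have zc_in: "(z n, c n) \<in> E" for n
    using w by (simp add: z_def c_def)
  have "u = (\<lambda>n. c n + (norm (z n))\<^sup>2/2)"
    using w by (simp add: fun_eq_iff q_def z_def c_def split_beta)
  with \<open>u \<longlonglongrightarrow> m\<close> have lim: "(\<lambda>n. c n + (norm (z n))\<^sup>2/2) \<longlonglongrightarrow> m"
    by simp
  obtain z0 where z0: "z \<longlonglongrightarrow> z0"
    using Cauchy_minimizing_sequence_add_half_sq_norm[OF \<open>convex E\<close> m_le zc_in lim]
    by (auto simp: Cauchy_convergent_iff convergent_def)
  have "(\<lambda>n. (norm (z n))\<^sup>2/2) \<longlonglongrightarrow> (norm z0)\<^sup>2/2"
    by (intro tendsto_divide tendsto_power tendsto_norm z0 tendsto_const) simp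
  from tendsto_diff[OF lim this] have "c \<longlonglongrightarrow> m - (norm z0)\<^sup>2/2"
    by simp
  with z0 have "(\<lambda>n. (z n, c n)) \<longlonglongrightarrow> (z0, m - (norm z0)\<^sup>2/2)"
    by (rule tendsto_Pair)
  then have "(z0, m - (norm z0)\<^sup>2/2) \<in> E"
    by (rule closed_sequentially[of E "\<lambda>n. (z n, c n)", OF \<open>closed E\<close> zc_in])
  with m_le show ?thesis
    by (intro exI[of _ z0] exI[of _ "m - (norm z0)\<^sup>2/2"]) auto
qed

lemma minimizer_add_half_sq_norm_variational:
  fixes E :: "('a::real_inner \<times> real) set"
  assumes "convex E" and "(z0, c0) \<in> E"
    and min: "\<And>z c. (z, c) \<in> E \<Longrightarrow> c0 + (norm z0)\<^sup>2/2 \<le> c + (norm z)\<^sup>2/2"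
    and "(z, c) \<in> E"
  shows "c0 \<le> c + inner z0 (z - z0)"
proof -
  define D where "D = c - c0 + inner z0 (z - z0)"
  define K where "K = (norm (z - z0))\<^sup>2/2"
  have "0 \<le> D + t * K" if "0 < t" "t \<le> 1" for t
  proof -
    have "(1 - t) *\<^sub>R (z0, c0) + t *\<^sub>R (z, c) = (z0 + t *\<^sub>R (z - z0), c0 + t * (c - c0))"
      by (simp add: algebra_simps)
    then have "(z0 + t *\<^sub>R (z - z0), c0 + t * (c - c0)) \<in> E"
      using convexD[OF assms(1,2,4), of "1 - t" t] that by simp
    then have "c0 + (norm z0)\<^sup>2/2 \<le> c0 + t * (c - c0) + (norm (z0 + t *\<^sub>R (z - z0)))\<^sup>2/2"
      by (rule min)
    also have "\<dots> = c0 + (norm z0)\<^sup>2/2 + t * (D + t * K)"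
      unfolding D_def K_def power2_norm_eq_inner
      by (simp add: inner_simps inner_commute field_simps power2_eq_square)
    finally show ?thesis using \<open>0 < t\<close> by (simp add: zero_le_mult_iff)
  qed
  moreover have "(\<lambda>n. D + inverse (Suc n) * K) \<longlonglongrightarrow> D + 0 * K"
    by (intro tendsto_intros LIMSEQ_inverse_real_of_nat)
  moreover have "inverse (real (Suc n)) \<le> 1" for n
    by (simp add: inverse_le_1_iff)
  ultimately have "0 \<le> D + 0 * K"
    by (intro LIMSEQ_le_const) auto
  then show ?thesis by (simp add: D_def)
qed

lemma maximal_monotone_graph_nonempty: "maximal_monotone B \<Longrightarrow> \<exists>y v. v \<in> B y"
  using maximal_monotoneD[of B 0 0] by blast

lemma maximal_monotone_ex_neg_mem:
  fixes B :: "'a::{real_inner, complete_space} \<Rightarrow> 'a set"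
  assumes "maximal_monotone B"
  shows "\<exists>p. - p \<in> B p"
proof -
  define E where "E = fitzpatrick_epigraph B"
  have mono: "monotone_op B" using assms by (rule maximal_monotone_imp_monotone)
  have "E \<noteq> {}"
    using maximal_monotone_graph_nonempty[OF assms] graph_in_fitzpatrick_epigraph[OF mono]
    by (auto simp: E_def)
  then obtain z0 c0 where z0_in: "(z0, c0) \<in> E"
    and z0_min: "\<forall>z c. (z, c) \<in> E \<longrightarrow> c0 + (norm z0)\<^sup>2/2 \<le> c + (norm z)\<^sup>2/2"
    using ex_minimizer_add_half_sq_norm[of E 0] closed_fitzpatrick_epigraph convex_fitzpatrick_epigraph
      fitzpatrick_epigraph_add_half_sq_norm_nonneg[OF assms]
    unfolding E_def by blast
  obtain x0 u0 where z0: "z0 = (x0, u0)" by fastforce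
  have c0_ge: "inner x0 u0 \<le> c0"
    using fitzpatrick_epigraph_inner_le[OF assms] z0_in by (simp add: E_def z0)
  have vi: "c0 \<le> c + inner z0 (z - z0)" if "(z, c) \<in> E" for z c
    using minimizer_add_half_sq_norm_variational[of E z0 c0] convex_fitzpatrick_epigraph
      z0_in z0_min that unfolding E_def by blast
  have graph_vi: "c0 \<le> inner y v + inner x0 (y - x0) + inner u0 (v - u0)" if "v \<in> B y" for y v
    using vi[OF graph_in_fitzpatrick_epigraph[OF mono that, folded E_def]] by (simp add: z0)
  have "- x0 \<in> B (- u0)"
  proof (rule maximal_monotoneD[OF assms])
    fix y v assume "v \<in> B y"
    have "0 \<le> inner (x0 + u0) (x0 + u0)" by simp
    with graph_vi[OF \<open>v \<in> B y\<close>] c0_ge show "0 \<le> inner (- x0 - v) (- u0 - y)"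
      by (simp add: inner_simps inner_commute)
  qed
  with graph_vi[of "- x0" "- u0"] c0_ge have "inner (x0 + u0) (x0 + u0) \<le> 0"
    by (simp add: inner_simps inner_commute)
  then have "x0 + u0 = 0"
    by (metis inner_eq_zero_iff inner_ge_zero order_antisym)
  then have "u0 = - x0"
    by (simp add: add_eq_0_iff)
  with \<open>- x0 \<in> B (- u0)\<close> show ?thesis by auto
qed

lemma maximal_monotone_affine_preimage:
  assumes "maximal_monotone B" and "0 < c"
  shows "maximal_monotone (\<lambda>y. {v. c *\<^sub>R v + w \<in> B y})"
  unfolding maximal_monotone_def monotone_op_def
proof (intro conjI allI impI)
  fix x y u v
  assume "u \<in> {v. c *\<^sub>R v + w \<in> B x}" "v \<in> {v'. c *\<^sub>R v' + w \<in> B y}"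
  then have "0 \<le> inner ((c *\<^sub>R u + w) - (c *\<^sub>R v + w)) (x - y)"
    using maximal_monotone_imp_monotone[OF assms(1)] unfolding monotone_op_def by blast
  then show "0 \<le> inner (u - v) (x - y)"
    using \<open>0 < c\<close> by (simp add: inner_diff_left zero_le_mult_iff)
next
  fix x u
  assume hyp: "\<forall>y v. v \<in> {v. c *\<^sub>R v + w \<in> B y} \<longrightarrow> 0 \<le> inner (u - v) (x - y)"
  have "c *\<^sub>R u + w \<in> B x"
  proof (rule maximal_monotoneD[OF assms(1)])
    fix y v assume "v \<in> B y"
    then have "0 \<le> inner (u - (1/c) *\<^sub>R (v - w)) (x - y)"
      using hyp \<open>0 < c\<close> by simp
    moreover have "c *\<^sub>R u + w - v = c *\<^sub>R (u - (1/c) *\<^sub>R (v - w))"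
      using \<open>0 < c\<close> by (simp add: algebra_simps)
    ultimately show "0 \<le> inner (c *\<^sub>R u + w - v) (x - y)"
      using \<open>0 < c\<close> by simp
  qed
  then show "u \<in> {v. c *\<^sub>R v + w \<in> B x}" by simp
qed

section \<open>Resolvents and the forward-backward point\<close>

lemma ex_resolvent_inclusion:
  fixes B :: "'a::{real_inner, complete_space} \<Rightarrow> 'a set"
  assumes "maximal_monotone B" and "0 < a"
  shows "\<exists>p. (1/a) *\<^sub>R (z - p) \<in> B p"
proof -
  obtain p where "- p \<in> {v. (1/a) *\<^sub>R v + (1/a) *\<^sub>R z \<in> B p}"
    using maximal_monotone_ex_neg_mem[OF maximal_monotone_affine_preimage[OF assms(1)]] assms(2)
    by fastforce
  then have "(1/a) *\<^sub>R (z - p) \<in> B p"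
    by (simp add: algebra_simps)
  then show ?thesis ..
qed

lemma resolvent_eqI:
  assumes "monotone_op B" and "0 < a" and "(1/a) *\<^sub>R (z - p) \<in> B p"
  shows "resolvent B a z = p"
  unfolding resolvent_def
proof (rule the_equality)
  fix q assume "(1/a) *\<^sub>R (z - q) \<in> B q"
  with assms have "0 \<le> inner ((1/a) *\<^sub>R (z - q) - (1/a) *\<^sub>R (z - p)) (q - p)"
    unfolding monotone_op_def by blast
  moreover have "(1/a) *\<^sub>R (z - q) - (1/a) *\<^sub>R (z - p) = - ((1/a) *\<^sub>R (q - p))"
    by (simp add: algebra_simps)
  ultimately have "inner (q - p) (q - p) \<le> 0"
    using \<open>0 < a\<close> by (simp add: divide_le_0_iff)
  then show "q = p"
    by (metis eq_iff_diff_eq_0 inner_eq_zero_iff inner_ge_zero order_antisym)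
qed (fact assms(3))

lemma resolvent_mem:
  fixes B :: "'a::{real_inner, complete_space} \<Rightarrow> 'a set"
  assumes "maximal_monotone B" and "0 < a"
  shows "(1/a) *\<^sub>R (z - resolvent B a z) \<in> B (resolvent B a z)"
proof -
  obtain p where p: "(1/a) *\<^sub>R (z - p) \<in> B p"
    using ex_resolvent_inclusion[OF assms] by blast
  with resolvent_eqI[OF maximal_monotone_imp_monotone[OF assms(1)] assms(2)] show ?thesis
    by simp
qed

lemma fb_point_mem:
  fixes B :: "'a::{real_inner, complete_space} \<Rightarrow> 'a set"
  assumes "maximal_monotone B" and "0 < a"
  shows "(1/a) *\<^sub>R (x - fb_point B A a x) - A x \<in> B (fb_point B A a x)"
  using resolvent_mem[OF assms, of "x - a *\<^sub>R A x"] \<open>0 < a\<close>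
  by (simp add: fb_point_def algebra_simps)

lemma fb_point_eq_self_iff:
  fixes B :: "'a::{real_inner, complete_space} \<Rightarrow> 'a set"
  assumes "maximal_monotone B" and "0 < a"
  shows "fb_point B A a x = x \<longleftrightarrow> x \<in> zer_sum A B"
proof
  assume "fb_point B A a x = x"
  then have "- A x \<in> B x"
    using fb_point_mem[OF assms, of x A] by simp
  then show "x \<in> zer_sum A B"
    unfolding zer_sum_def by (intro CollectI bexI[of _ "- A x"]) simp_all
next
  assume "x \<in> zer_sum A B"
  then obtain b where "b \<in> B x" and "A x + b = 0"
    unfolding zer_sum_def by blast
  then have "- A x \<in> B x"
    by (simp add: add_eq_0_iff)
  then have "(1/a) *\<^sub>R (x - a *\<^sub>R A x - x) \<in> B x"
    using \<open>0 < a\<close> by simp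
  then show "fb_point B A a x = x"
    unfolding fb_point_def
    by (rule resolvent_eqI[OF maximal_monotone_imp_monotone[OF assms(1)] assms(2)])
qed

lemma norm_fb_residual_mono:
  fixes B :: "'a::{real_inner, complete_space} \<Rightarrow> 'a set"
  assumes "maximal_monotone B" and "0 < m1" and "m1 \<le> m2"
  shows "norm (x - fb_point B A m1 x) \<le> norm (x - fb_point B A m2 x) \<and>
    m1 * norm (x - fb_point B A m2 x) \<le> m2 * norm (x - fb_point B A m1 x)"
proof -
  have "0 < m2" using assms(2,3) by linarith
  define r1 where "r1 = x - fb_point B A m1 x"
  define r2 where "r2 = x - fb_point B A m2 x"
  define s where "s = norm r1"
  define t where "t = norm r2"
  have "0 \<le> inner (((1/m1) *\<^sub>R r1 - A x) - ((1/m2) *\<^sub>R r2 - A x)) (r2 - r1)"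
    using fb_point_mem[OF assms(1,2), of x A] fb_point_mem[OF assms(1) \<open>0 < m2\<close>, of x A]
      maximal_monotone_imp_monotone[OF assms(1)]
    unfolding monotone_op_def r1_def r2_def by fastforce
  moreover have "m2 *\<^sub>R r1 - m1 *\<^sub>R r2 = (m1 * m2) *\<^sub>R (((1/m1) *\<^sub>R r1 - A x) - ((1/m2) *\<^sub>R r2 - A x))"
    using assms(2) \<open>0 < m2\<close> by (simp add: algebra_simps)
  ultimately have "0 \<le> inner (m2 *\<^sub>R r1 - m1 *\<^sub>R r2) (r2 - r1)"
    using assms(2) \<open>0 < m2\<close> by simp
  then have "m2 * s\<^sup>2 + m1 * t\<^sup>2 \<le> (m1 + m2) * inner r1 r2"
    unfolding s_def t_def power2_norm_eq_inner by (simp add: inner_simps inner_commute algebra_simps)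
  also have "\<dots> \<le> (m1 + m2) * (s * t)"
    using norm_cauchy_schwarz[of r1 r2] assms(2) \<open>0 < m2\<close>
    by (intro mult_left_mono) (auto simp: s_def t_def)
  finally have "0 \<le> (t - s) * (m2 * s - m1 * t)"
    by (simp add: algebra_simps power2_eq_square)
  moreover have "0 \<le> s" "0 \<le> t" by (simp_all add: s_def t_def)
  ultimately have "s \<le> t \<and> m1 * t \<le> m2 * s"
    using assms(2,3) by (smt (verit) mult_left_le_imp_le mult_mono zero_le_mult_iff)
  then show ?thesis by (simp add: s_def t_def r1_def r2_def)
qed

section \<open>Termination of the line search\<close>

lemma uniformly_continuous_on_subset:
  fixes f :: "'a::metric_space \<Rightarrow> 'b::metric_space"
  shows "uniformly_continuous_on T f \<Longrightarrow> S \<subseteq> T \<Longrightarrow> uniformly_continuous_on S f"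
  unfolding uniformly_continuous_on_def by (meson subsetD)

lemma bounded_uniformly_continuous_image_convex:
  fixes f :: "'a::real_normed_vector \<Rightarrow> 'b::real_normed_vector"
  assumes "uniformly_continuous_on S f" and "convex S" and "bounded S"
  shows "bounded (f ` S)"
proof (cases "S = {}")
  case False
  then obtain x0 where "x0 \<in> S" by blast
  obtain R where R: "\<And>y. y \<in> S \<Longrightarrow> norm (y - x0) \<le> R"
    using \<open>bounded S\<close> unfolding bounded_any_center[of S x0] by (metis dist_norm dist_commute)
  obtain e where "0 < e" and e: "\<And>x x'. x \<in> S \<Longrightarrow> x' \<in> S \<Longrightarrow> dist x' x < e \<Longrightarrow> dist (f x') (f x) < 1"
    using assms(1) unfolding uniformly_continuous_on_def by (meson zero_less_one)
  obtain N :: nat where "R < N * e"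
    using reals_Archimedean3[OF \<open>0 < e\<close>] by blast
  define M where "M = Suc N"
  have "R < M * e"
    using \<open>R < N * e\<close> \<open>0 < e\<close> unfolding M_def by (simp add: distrib_right)
  have "norm (f y - f x0) \<le> M" if "y \<in> S" for y
  proof -
    define g where "g i = x0 + (real i / M) *\<^sub>R (y - x0)" for i
    have g_in: "g i \<in> S" if "i \<le> M" for i
    proof -
      have "g i = (1 - real i / M) *\<^sub>R x0 + (real i / M) *\<^sub>R y"
        by (simp add: g_def algebra_simps)
      then show ?thesis
        using convexD[OF \<open>convex S\<close> \<open>x0 \<in> S\<close> \<open>y \<in> S\<close>, of "1 - real i / M" "real i / M"] that
        by (simp add: M_def)
    qed
    have step: "norm (f (g (Suc i)) - f (g i)) \<le> 1" if "i < M" for i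
    proof -
      have "g (Suc i) - g i = ((real (Suc i) - real i) / M) *\<^sub>R (y - x0)"
        unfolding g_def by (simp only: add_diff_cancel_left diff_divide_distrib scaleR_diff_left)
      then have "dist (g (Suc i)) (g i) = norm (y - x0) / M"
        by (simp add: dist_norm M_def)
      also have "\<dots> < e"
        using R[OF \<open>y \<in> S\<close>] \<open>R < M * e\<close> by (simp add: M_def field_simps)
      finally show ?thesis
        using e[OF g_in g_in] that by (simp add: dist_norm less_imp_le)
    qed
    have "f y - f x0 = f (g M) - f (g 0)"
      by (simp add: g_def M_def)
    also have "\<dots> = (\<Sum>i<M. f (g (Suc i)) - f (g i))"
      by (rule sum_lessThan_telescope[symmetric])
    also have "norm \<dots> \<le> (\<Sum>i<M. norm (f (g (Suc i)) - f (g i)))"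
      by (rule norm_sum)
    also have "\<dots> \<le> (\<Sum>i<M. 1)"
      using step by (intro sum_mono) simp
    finally show ?thesis by simp
  qed
  then show ?thesis
    unfolding bounded_any_center[of _ "f x0"] by (metis dist_commute dist_norm imageE)
qed simp

lemma uniformly_continuous_ex_scaled_diff_le:
  fixes f :: "'a::real_normed_vector \<Rightarrow> 'b::real_normed_vector"
  assumes uc: "uniformly_continuous_on UNIV f" and "\<mu> \<longlonglongrightarrow> 0" and \<mu>_pos: "\<And>j. 0 < \<mu> j"
    and "0 < c" and "0 < \<delta>"
    and lower: "\<And>j. c * \<mu> j \<le> norm (x - p j)" and upper: "\<And>j. norm (x - p j) \<le> R"
  shows "\<exists>j. \<mu> j * norm (f x - f (p j)) \<le> \<delta> * norm (x - p j)"
proof (rule ccontr)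
  assume "\<not> ?thesis"
  then have far: "\<delta> * norm (x - p j) < \<mu> j * norm (f x - f (p j))" for j
    by (simp add: not_le)
  obtain \<eta> where "0 < \<eta>" and \<eta>: "\<And>y. dist y x < \<eta> \<Longrightarrow> dist (f y) (f x) < \<delta> * c"
    using uc \<open>0 < \<delta>\<close> \<open>0 < c\<close> unfolding uniformly_continuous_on_def
    by (metis UNIV_I mult_pos_pos)
  have \<eta>_le: "\<eta> \<le> norm (x - p j)" for j
  proof (rule ccontr)
    assume "\<not> \<eta> \<le> norm (x - p j)"
    then have "norm (f x - f (p j)) \<le> \<delta> * c"
      using \<eta>[of "p j"] by (simp add: dist_norm norm_minus_commute)
    then have "\<mu> j * norm (f x - f (p j)) \<le> \<delta> * (c * \<mu> j)"
      using \<mu>_pos[of j] by (simp add: mult_left_mono mult.commute mult.left_commute)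
    also have "\<dots> \<le> \<delta> * norm (x - p j)"
      using lower[of j] \<open>0 < \<delta>\<close> by simp
    finally show False using far[of j] by simp
  qed
  have "bounded (f ` cball x R)"
    using uniformly_continuous_on_subset[OF uc]
    by (intro bounded_uniformly_continuous_image_convex) auto
  then obtain K0 where K0: "\<forall>y \<in> cball x R. norm (f y) \<le> K0"
    unfolding bounded_iff by auto
  have "0 \<le> R"
    by (rule order_trans[OF norm_ge_zero upper])
  then have "x \<in> cball x R" "p j \<in> cball x R" for j
    using upper[of j] by (auto simp: dist_norm)
  then have "norm (f x) \<le> K0" "norm (f (p j)) \<le> K0" for j
    using K0 by blast+
  then have K: "norm (f x - f (p j)) \<le> 2 * K0" for j
    using norm_triangle_ineq4[of "f x" "f (p j)"] by (smt (verit))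
  have lower_bound: "\<delta> * \<eta> < \<mu> j * (2 * K0)" for j
    using far[of j] \<eta>_le[of j] K[of j] \<mu>_pos[of j] \<open>0 < \<delta>\<close>
    by (smt (verit) mult_left_mono)
  have "(\<lambda>j. \<mu> j * (2 * K0)) \<longlonglongrightarrow> 0"
    using tendsto_mult_left_zero[OF \<open>\<mu> \<longlonglongrightarrow> 0\<close>] .
  then have "eventually (\<lambda>j. \<mu> j * (2 * K0) < \<delta> * \<eta>) sequentially"
    using \<open>0 < \<delta>\<close> \<open>0 < \<eta>\<close> by (intro order_tendstoD(2)) auto
  then obtain N where "\<And>j. N \<le> j \<Longrightarrow> \<mu> j * (2 * K0) < \<delta> * \<eta>"
    unfolding eventually_sequentially by blast
  with lower_bound[of N] show False by fastforce
qed

lemma ex_line_search_step: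
  fixes B :: "'a::{real_inner, complete_space} \<Rightarrow> 'a set" and A A2 :: "'a \<Rightarrow> 'a"
  assumes B: "maximal_monotone B" and uc: "uniformly_continuous_on UNIV A2"
    and "0 < a" and "0 < \<theta>" and "\<theta> < 1" and "0 < \<delta>"
  shows "\<exists>j. a * \<theta> ^ j * inner (A2 x - A2 (fb_point B A (a * \<theta> ^ j) x)) (x - fb_point B A (a * \<theta> ^ j) x)
    \<le> \<delta> * (norm (x - fb_point B A (a * \<theta> ^ j) x))\<^sup>2"
proof (cases "x \<in> zer_sum A B")
  case True
  then have "fb_point B A (a * \<theta> ^ 0) x = x"
    using fb_point_eq_self_iff[OF B \<open>0 < a\<close>] by simp
  then show ?thesis by (intro exI[of _ 0]) simp
next
  case False
  define \<mu> where "\<mu> j = a * \<theta> ^ j" for j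
  define p where "p j = fb_point B A (\<mu> j) x" for j
  define d0 where "d0 = norm (x - fb_point B A a x)"
  have "0 < d0"
    using False fb_point_eq_self_iff[OF B \<open>0 < a\<close>, of A x] by (auto simp: d0_def)
  have \<mu>_pos: "0 < \<mu> j" for j
    using \<open>0 < a\<close> \<open>0 < \<theta>\<close> by (simp add: \<mu>_def)
  have \<mu>_le: "\<mu> j \<le> a" for j
    using \<open>0 < a\<close> \<open>0 < \<theta>\<close> \<open>\<theta> < 1\<close> by (simp add: \<mu>_def power_le_one mult_left_le)
  have upper: "norm (x - p j) \<le> d0" and "\<mu> j * d0 \<le> a * norm (x - p j)" for j
    using norm_fb_residual_mono[OF B \<mu>_pos \<mu>_le, of x A] unfolding d0_def p_def by simp_all
  then have lower: "d0 / a * \<mu> j \<le> norm (x - p j)" for j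
    using \<open>0 < a\<close> by (simp add: field_simps)
  have \<mu>_lim: "\<mu> \<longlonglongrightarrow> 0"
    unfolding \<mu>_def using \<open>0 < \<theta>\<close> \<open>\<theta> < 1\<close>
    by (intro tendsto_mult_right_zero LIMSEQ_power_zero) simp
  have "0 < d0 / a"
    using \<open>0 < d0\<close> \<open>0 < a\<close> by simp
  then obtain j where j: "\<mu> j * norm (A2 x - A2 (p j)) \<le> \<delta> * norm (x - p j)"
    using uniformly_continuous_ex_scaled_diff_le[OF uc \<mu>_lim \<mu>_pos _ \<open>0 < \<delta>\<close> lower upper] by blast
  have "\<mu> j * inner (A2 x - A2 (p j)) (x - p j) \<le> \<mu> j * (norm (A2 x - A2 (p j)) * norm (x - p j))"
    using norm_cauchy_schwarz \<mu>_pos[of j] by (intro mult_left_mono) auto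
  also have "\<dots> \<le> \<delta> * norm (x - p j) * norm (x - p j)"
    using j by (simp add: mult.assoc[symmetric] mult_right_mono)
  finally show ?thesis
    by (intro exI[of _ j]) (simp add: \<mu>_def p_def power2_eq_square)
qed

lemma ls_index_spec:
  fixes B :: "'a::{real_inner, complete_space} \<Rightarrow> 'a set" and A A2 :: "'a \<Rightarrow> 'a"
  assumes "maximal_monotone B" and "uniformly_continuous_on UNIV A2"
    and "0 < a" and "0 < \<theta>" and "\<theta> < 1" and "0 < \<delta>"
    and "j = ls_index B A A2 \<theta> \<delta> a x"
  shows "a * \<theta> ^ j * inner (A2 x - A2 (fb_point B A (a * \<theta> ^ j) x)) (x - fb_point B A (a * \<theta> ^ j) x)
    \<le> \<delta> * (norm (x - fb_point B A (a * \<theta> ^ j) x))\<^sup>2"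
  using LeastI_ex[OF ex_line_search_step[OF assms(1-6)]]
  unfolding assms(7) ls_index_def .

lemma self_mem_T_set_iff:
  fixes B :: "'a::{real_inner, complete_space} \<Rightarrow> 'a set"
  assumes "maximal_monotone B" and "0 < \<mu>" and "\<delta> + \<delta>b < 1"
    and line_search: "\<mu> * inner (A2 x - A2 (fb_point B A \<mu> x)) (x - fb_point B A \<mu> x)
      \<le> \<delta> * (norm (x - fb_point B A \<mu> x))\<^sup>2"
  shows "x \<in> T_set B A A2 \<delta>b \<mu> x \<longleftrightarrow> x \<in> zer_sum A B"
proof -
  define p where "p = fb_point B A \<mu> x"
  define r where "r = (norm (x - p))\<^sup>2"
  define I where "I = inner (A2 x - A2 p) (x - p)"
  have "x \<in> T_set B A A2 \<delta>b \<mu> x \<longleftrightarrow> r / \<mu> - I \<le> \<delta>b / \<mu> * r"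
    by (simp add: T_set_def Let_def p_def r_def I_def inner_diff_left power2_norm_eq_inner)
  also have "\<dots> \<longleftrightarrow> r - \<mu> * I \<le> \<delta>b * r"
    using \<open>0 < \<mu>\<close> by (simp add: divide_le_eq diff_le_eq pos_divide_le_eq algebra_simps)
  also have "\<dots> \<longleftrightarrow> p = x"
  proof
    assume "r - \<mu> * I \<le> \<delta>b * r"
    moreover have "\<mu> * I \<le> \<delta> * r"
      using line_search by (simp add: p_def r_def I_def)
    ultimately have "(1 - \<delta> - \<delta>b) * r \<le> 0"
      by (simp add: algebra_simps)
    then have "r \<le> 0"
      using \<open>\<delta> + \<delta>b < 1\<close> by (simp add: mult_le_0_iff)
    then show "p = x" by (simp add: r_def)
  qed (simp add: r_def I_def)
  also have "\<dots> \<longleftrightarrow> x \<in> zer_sum A B"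
    unfolding p_def by (rule fb_point_eq_self_iff[OF assms(1,2)])
  finally show ?thesis .
qed

lemma backtracking_step_sizes_pos:
  fixes alpha :: "nat \<Rightarrow> real"
  assumes "0 < a0" and "0 < \<theta>"
    and "\<forall>i\<le>k. alpha i = (if i = 0 then a0 else alpha (i - 1)) * \<theta> ^ J i"
  shows "i \<le> k \<Longrightarrow> 0 < alpha i"
proof (induction i)
  case 0
  then show ?case using assms(1,2) assms(3)[rule_format, of 0] by simp
next
  case (Suc i)
  then show ?case using assms(2) assms(3)[rule_format, of "Suc i"] by simp
qed

theorem proposition4p5:
  fixes A1 A2 :: "'a::{real_inner, complete_space} \<Rightarrow> 'a"
    and B :: "'a \<Rightarrow> 'a set"
    and \<beta> \<theta> \<delta> \<delta>b alpha_m1 :: real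
    and x :: "nat \<Rightarrow> 'a" and alpha :: "nat \<Rightarrow> real" and k :: nat
  defines "A \<equiv> (\<lambda>z. A1 z + A2 z)"
  assumes "\<beta> > 0" and "cocoercive \<beta> A1"
    and "maximal_monotone (\<lambda>z. {A2 z})" and "uniformly_continuous_on UNIV A2"
    and "maximal_monotone B"
    and "zer_sum A B \<noteq> {}"
    and "0 < \<theta>" "\<theta> < 1" "0 < \<delta>" "\<delta> < 1" "\<delta>b > 0" "1 - \<delta> - \<delta>b > 0"
    and "alpha_m1 > 0" "alpha_m1 \<le> 4 * \<beta> * \<delta>b"
    and alpha_rule: "\<forall>i\<le>k. alpha i =
           (if i = 0 then alpha_m1 else alpha (i - 1)) *
             \<theta> ^ ls_index B A A2 \<theta> \<delta> (if i = 0 then alpha_m1 else alpha (i - 1)) (x i)"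
    and x_rule: "(\<forall>i<k. x (Suc i) = proj (T_set B A A2 \<delta>b (alpha i) (x i)) (x i))
        \<or> (\<forall>i<k. x (Suc i) = proj (T_set B A A2 \<delta>b (alpha i) (x i) \<inter> Gamma_set (x 0) (x i)) (x 0))"
  shows "x k \<in> T_set B A A2 \<delta>b (alpha k) (x k) \<longleftrightarrow> x k \<in> zer_sum A B"
proof -
  define a where "a = (if k = 0 then alpha_m1 else alpha (k - 1))"
  have alpha_pos: "0 < alpha i" if "i \<le> k" for i
    using backtracking_step_sizes_pos[OF \<open>alpha_m1 > 0\<close> \<open>0 < \<theta>\<close> alpha_rule that] .
  have "0 < a"
    using alpha_pos \<open>alpha_m1 > 0\<close> by (simp add: a_def)
  define j where "j = ls_index B A A2 \<theta> \<delta> a (x k)"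
  have alpha_k: "alpha k = a * \<theta> ^ j"
    using alpha_rule[rule_format, of k] by (simp add: a_def j_def)
  have "alpha k * inner (A2 (x k) - A2 (fb_point B A (alpha k) (x k))) (x k - fb_point B A (alpha k) (x k))
      \<le> \<delta> * (norm (x k - fb_point B A (alpha k) (x k)))\<^sup>2"
    unfolding alpha_k
    by (rule ls_index_spec[OF \<open>maximal_monotone B\<close> \<open>uniformly_continuous_on UNIV A2\<close> \<open>0 < a\<close>
          \<open>0 < \<theta>\<close> \<open>\<theta> < 1\<close> \<open>0 < \<delta>\<close> j_def])
  moreover have "\<delta> + \<delta>b < 1"
    using \<open>1 - \<delta> - \<delta>b > 0\<close> by simp
  ultimately show ?thesis
    using self_mem_T_set_iff[OF \<open>maximal_monotone B\<close> alpha_pos[OF order_refl]] by blast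
qed

end
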